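(* (Reliability/soundness of KEDL.) For every set $\Gamma$ of KEDL concepts and every KEDL concept $\phi$: if $\Gamma\vdash\phi$ then $\Gamma\models\phi$.
   Context: KEDL syntax. Fix countable pairwise disjoint sets of object concept names, attribute concept names, and role names $\mathbf P$ (object–object), $\mathbf Q$ (attribute–attribute), $\mathbf R$ (object–attribute); $r^-$ is the inverse of $r\in\mathbf R$. Object concepts $\Phi$ and attribute concepts $\Omega$ are the least sets such that: object concept names, $\top,\bot\in\Phi$; attribute concept names $\in\Omega$; $C,D\in\Phi\Rightarrow\neg C,C\sqcap D,C\sqcup D\in\Phi$; $p\in\mathbf P,C\in\Phi\Rightarrow\forall p.C,\exists p.C\in\Phi$; $r\in\mathbf R,A\in\Omega\Rightarrow\forall r.A,\exists r.A\in\Phi$; $A,B\in\Omega\Rightarrow\neg A,A\sqcap B,A\sqcup B\in\Omega$; $q\in\mathbf Q,A\in\Omega\Rightarrow\forall q.A,\exists q.A\in\Omega$; $r\in\mathbf R,C\in\Phi\Rightarrow\forall r^-.C,\exists r^-.C\in\Omega$. For same-sort $\phi,\psi$, $\phi\to\psi$ stands for $\neg\phi\sqcup\psi$ and $\phi\leftrightarrow\psi$ for $(\phi\to\psi)\sqcap(\psi\to\phi)$. KEDL model $M=(\Delta^I,\Sigma^I,\cdot^I)$: $\Delta^I,\Sigma^I$ nonempty; object concept names $\mapsto$ subsets of $\Delta^I$, attribute concept names $\mapsto$ subsets of $\Sigma^I$, $p^I\subseteq\Delta^I\times\Delta^I$, $q^I\subseteq\Sigma^I\times\Sigma^I$, $r^I\subseteq\Delta^I\times\Sigma^I$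 with each $x\in\Delta^I$ having exactly one $r^I$-successor; $(r^-)^I$ is the converse of $r^I$. Extension: $\top^I=\Delta^I,\bot^I=\emptyset$; complement relative to the domain of the sort; $\sqcap,\sqcup$ as $\cap,\cup$; $(\forall s.E)^I=\{x:\forall y((x,y)\in s^I\Rightarrow y\in E^I)\}$, $(\exists s.E)^I=\{x:\exists y((x,y)\in s^I\wedge y\in E^I)\}$ for $s\in\mathbf P\cup\mathbf Q\cup\mathbf R\cup\{r^-\}$, $x$ ranging over the domain of the source sort of $s$. A concept is valid in $M$ if its interpretation is the whole domain of its sort. $\Gamma\models\phi$: in every model where all members of $\Gamma$ are valid, $\phi$ is valid. Deduction: $\Gamma\vdash\phi$ iff there is a finite sequence $\phi_1,\dots,\phi_n=\phi$ where each $\phi_k$ is a member of $\Gamma$, or an instance of an axiom scheme (A1)–(A17), or follows by modus ponens from earlier $\phi_i$ and $\phi_j=\phi_i\to\phi_k$, or follows from earlier members by rule (R19) (from $\alpha\to\beta$, $\beta\to\alpha$ infer $\alpha\leftrightarrow\beta$), (R20) (from $\alpha\to\beta$, $\beta\to\gamma$ infer $\alpha\to\gamma$), or (R21) (from $\alpha\to\beta\sqcap\gamma$ infer $\alpha\to\beta$ and $\alpha\to\gamma$, and conversely). Axiom schemes (same-sort $\phi,\psi,\gamma$; $C,D\in\Phi$; $A,B\in\Omega$): (A1) $\phi\to(\psi\to\phi)$; (A2) $(\phi\to(\psi\to\gamma))\to((\phi\to\psi)\to(\phi\to\gamma))$; (A3) $(\neg\phi\to\neg\psi)\to(\psi\to\phi)$;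 for $(s,E,F)$ equal to $(p,C,D)$ [A4–A6], $(q,A,B)$ [A7–A9], $(r,A,B)$ [A10–A12], $(r^-,C,D)$ [A13–A15]: $(\exists s.E\sqcup\exists s.F)\to\exists s.(E\sqcup F)$, $\exists s.(E\sqcap F)\to(\exists s.E\sqcap\exists s.F)$, $(\exists s.E\sqcap\forall s.F)\to\exists s.(E\sqcap F)$; (A16) $\exists r^-.\forall r.A\to A$; (A17) $\exists r.\forall r^-.C\to C$. *)

theory Defs
  imports Main
begin

text \<open>Names are natural numbers (countable); the five name sorts are kept apart
  by the constructors, so they are pairwise disjoint.\<close>

datatype obj =
    OName nat
  | OTop
  | OBot
  | ONeg obj
  | OAnd obj obj
  | OOr obj obj
  | OAllP nat obj
  | OExP nat obj
  | OAllR nat att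
  | OExR nat att
and att =
    AName nat
  | ANeg att
  | AAnd att att
  | AOr att att
  | AAllQ nat att
  | AExQ nat att
  | AAllRinv nat obj
  | AExRinv nat obj

datatype concept = Obj obj | Att att

definition OImp :: "obj \<Rightarrow> obj \<Rightarrow> obj" where "OImp C D = OOr (ONeg C) D"
definition OIff :: "obj \<Rightarrow> obj \<Rightarrow> obj" where "OIff C D = OAnd (OImp C D) (OImp D C)"
definition AImp :: "att \<Rightarrow> att \<Rightarrow> att" where "AImp A B = AOr (ANeg A) B"
definition AIff :: "att \<Rightarrow> att \<Rightarrow> att" where "AIff A B = AAnd (AImp A B) (AImp B A)"

inductive obj_axiom :: "obj \<Rightarrow> bool" where
  A1: "obj_axiom (OImp \<phi> (OImp \<psi> \<phi>))"
| A2: "obj_axiom (OImp (OImp \<phi> (OImp \<psi> \<gamma>)) (OImp (OImp \<phi> \<psi>) (OImp \<phi> \<gamma>)))"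
| A3: "obj_axiom (OImp (OImp (ONeg \<phi>) (ONeg \<psi>)) (OImp \<psi> \<phi>))"
| A4: "obj_axiom (OImp (OOr (OExP p C) (OExP p D)) (OExP p (OOr C D)))"
| A5: "obj_axiom (OImp (OExP p (OAnd C D)) (OAnd (OExP p C) (OExP p D)))"
| A6: "obj_axiom (OImp (OAnd (OExP p C) (OAllP p D)) (OExP p (OAnd C D)))"
| A10: "obj_axiom (OImp (OOr (OExR r A) (OExR r B)) (OExR r (AOr A B)))"
| A11: "obj_axiom (OImp (OExR r (AAnd A B)) (OAnd (OExR r A) (OExR r B)))"
| A12: "obj_axiom (OImp (OAnd (OExR r A) (OAllR r B)) (OExR r (AAnd A B)))"
| A17: "obj_axiom (OImp (OExR r (AAllRinv r C)) C)"

inductive att_axiom :: "att \<Rightarrow> bool" where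
  A1: "att_axiom (AImp \<phi> (AImp \<psi> \<phi>))"
| A2: "att_axiom (AImp (AImp \<phi> (AImp \<psi> \<gamma>)) (AImp (AImp \<phi> \<psi>) (AImp \<phi> \<gamma>)))"
| A3: "att_axiom (AImp (AImp (ANeg \<phi>) (ANeg \<psi>)) (AImp \<psi> \<phi>))"
| A7: "att_axiom (AImp (AOr (AExQ q A) (AExQ q B)) (AExQ q (AOr A B)))"
| A8: "att_axiom (AImp (AExQ q (AAnd A B)) (AAnd (AExQ q A) (AExQ q B)))"
| A9: "att_axiom (AImp (AAnd (AExQ q A) (AAllQ q B)) (AExQ q (AAnd A B)))"
| A13: "att_axiom (AImp (AOr (AExRinv r C) (AExRinv r D)) (AExRinv r (OOr C D)))"
| A14: "att_axiom (AImp (AExRinv r (OAnd C D)) (AAnd (AExRinv r C) (AExRinv r D)))"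
| A15: "att_axiom (AImp (AAnd (AExRinv r C) (AAllRinv r D)) (AExRinv r (OAnd C D)))"
| A16: "att_axiom (AImp (AExRinv r (OAllR r A)) A)"

inductive derivable :: "concept set \<Rightarrow> concept \<Rightarrow> bool" where
  hyp: "\<phi> \<in> \<Gamma> \<Longrightarrow> derivable \<Gamma> \<phi>"
| ax_obj: "obj_axiom C \<Longrightarrow> derivable \<Gamma> (Obj C)"
| ax_att: "att_axiom A \<Longrightarrow> derivable \<Gamma> (Att A)"
| mp_obj: "derivable \<Gamma> (Obj C) \<Longrightarrow> derivable \<Gamma> (Obj (OImp C D)) \<Longrightarrow> derivable \<Gamma> (Obj D)"
| mp_att: "derivable \<Gamma> (Att A) \<Longrightarrow> derivable \<Gamma> (Att (AImp A B)) \<Longrightarrow> derivable \<Gamma> (Att B)"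
| R19_obj: "derivable \<Gamma> (Obj (OImp C D)) \<Longrightarrow> derivable \<Gamma> (Obj (OImp D C)) \<Longrightarrow> derivable \<Gamma> (Obj (OIff C D))"
| R19_att: "derivable \<Gamma> (Att (AImp A B)) \<Longrightarrow> derivable \<Gamma> (Att (AImp B A)) \<Longrightarrow> derivable \<Gamma> (Att (AIff A B))"
| R20_obj: "derivable \<Gamma> (Obj (OImp C D)) \<Longrightarrow> derivable \<Gamma> (Obj (OImp D E)) \<Longrightarrow> derivable \<Gamma> (Obj (OImp C E))"
| R20_att: "derivable \<Gamma> (Att (AImp A B)) \<Longrightarrow> derivable \<Gamma> (Att (AImp B E)) \<Longrightarrow> derivable \<Gamma> (Att (AImp A E))"
| R21a_obj: "derivable \<Gamma> (Obj (OImp C (OAnd D E))) \<Longrightarrow> derivable \<Gamma> (Obj (OImp C D))"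
| R21b_obj: "derivable \<Gamma> (Obj (OImp C (OAnd D E))) \<Longrightarrow> derivable \<Gamma> (Obj (OImp C E))"
| R21c_obj: "derivable \<Gamma> (Obj (OImp C D)) \<Longrightarrow> derivable \<Gamma> (Obj (OImp C E)) \<Longrightarrow> derivable \<Gamma> (Obj (OImp C (OAnd D E)))"
| R21a_att: "derivable \<Gamma> (Att (AImp A (AAnd B E))) \<Longrightarrow> derivable \<Gamma> (Att (AImp A B))"
| R21b_att: "derivable \<Gamma> (Att (AImp A (AAnd B E))) \<Longrightarrow> derivable \<Gamma> (Att (AImp A E))"
| R21c_att: "derivable \<Gamma> (Att (AImp A B)) \<Longrightarrow> derivable \<Gamma> (Att (AImp A E)) \<Longrightarrow> derivable \<Gamma> (Att (AImp A (AAnd B E)))"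

record ('d, 's) kedl_model =
  odom :: "'d set"
  adom :: "'s set"
  oc :: "nat \<Rightarrow> 'd set"
  ac :: "nat \<Rightarrow> 's set"
  prel :: "nat \<Rightarrow> ('d \<times> 'd) set"
  qrel :: "nat \<Rightarrow> ('s \<times> 's) set"
  rrel :: "nat \<Rightarrow> ('d \<times> 's) set"

definition is_model :: "('d, 's) kedl_model \<Rightarrow> bool" where
  "is_model M \<longleftrightarrow>
     odom M \<noteq> {} \<and> adom M \<noteq> {} \<and>
     (\<forall>n. oc M n \<subseteq> odom M) \<and> (\<forall>n. ac M n \<subseteq> adom M) \<and>
     (\<forall>p. prel M p \<subseteq> odom M \<times> odom M) \<and>
     (\<forall>q. qrel M q \<subseteq> adom M \<times> adom M) \<and>
     (\<forall>r. rrel M r \<subseteq> odom M \<times> adom M) \<and>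
     (\<forall>r. \<forall>x\<in>odom M. \<exists>!y. (x, y) \<in> rrel M r)"

primrec ext_o :: "('d, 's) kedl_model \<Rightarrow> obj \<Rightarrow> 'd set"
  and ext_a :: "('d, 's) kedl_model \<Rightarrow> att \<Rightarrow> 's set" where
  "ext_o M (OName n) = oc M n"
| "ext_o M OTop = odom M"
| "ext_o M OBot = {}"
| "ext_o M (ONeg C) = odom M - ext_o M C"
| "ext_o M (OAnd C D) = ext_o M C \<inter> ext_o M D"
| "ext_o M (OOr C D) = ext_o M C \<union> ext_o M D"
| "ext_o M (OAllP p C) = {x \<in> odom M. \<forall>y. (x, y) \<in> prel M p \<longrightarrow> y \<in> ext_o M C}"
| "ext_o M (OExP p C) = {x \<in> odom M. \<exists>y. (x, y) \<in> prel M p \<and> y \<in> ext_o M C}"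
| "ext_o M (OAllR r A) = {x \<in> odom M. \<forall>y. (x, y) \<in> rrel M r \<longrightarrow> y \<in> ext_a M A}"
| "ext_o M (OExR r A) = {x \<in> odom M. \<exists>y. (x, y) \<in> rrel M r \<and> y \<in> ext_a M A}"
| "ext_a M (AName n) = ac M n"
| "ext_a M (ANeg A) = adom M - ext_a M A"
| "ext_a M (AAnd A B) = ext_a M A \<inter> ext_a M B"
| "ext_a M (AOr A B) = ext_a M A \<union> ext_a M B"
| "ext_a M (AAllQ q A) = {x \<in> adom M. \<forall>y. (x, y) \<in> qrel M q \<longrightarrow> y \<in> ext_a M A}"
| "ext_a M (AExQ q A) = {x \<in> adom M. \<exists>y. (x, y) \<in> qrel M q \<and> y \<in> ext_a M A}"
| "ext_a M (AAllRinv r C) = {x \<in> adom M. \<forall>y. (y, x) \<in> rrel M r \<longrightarrow> y \<in> ext_o M C}"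
| "ext_a M (AExRinv r C) = {x \<in> adom M. \<exists>y. (y, x) \<in> rrel M r \<and> y \<in> ext_o M C}"

fun valid_in :: "('d, 's) kedl_model \<Rightarrow> concept \<Rightarrow> bool" where
  "valid_in M (Obj C) = (ext_o M C = odom M)"
| "valid_in M (Att A) = (ext_a M A = adom M)"

text \<open>\<Gamma> \<Turnstile> \<phi> relative to models with carrier types 'd, 's; since these type
  variables are universally quantified in a theorem, this covers all models.\<close>
definition entails :: "'d itself \<Rightarrow> 's itself \<Rightarrow> concept set \<Rightarrow> concept \<Rightarrow> bool" where
  "entails _ _ \<Gamma> \<phi> \<longleftrightarrow>
     (\<forall>M :: ('d, 's) kedl_model. is_model M \<longrightarrow> (\<forall>\<psi>\<in>\<Gamma>. valid_in M \<psi>) \<longrightarrow> valid_in M \<phi>)"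

end

theory Submission
  imports Defs
begin

text \<open>Extensions always lie inside the domain of their sort, so in a model the implication
  \<open>C \<rightarrow> D\<close> is valid exactly when the extension of \<open>C\<close> is contained in that of \<open>D\<close>.
  Modus ponens and the rules (R19)--(R21) thereby become elementary facts about inclusion,
  the schemes (A1)--(A3) are Boolean identities in the powerset of the domain, (A4)--(A15)
  say how existential restrictions distribute over union and intersection, and (A16), (A17)
  hold because an element is a predecessor of each of its own successors.\<close>

lemma ext_subset_domains:
  assumes "is_model M"
  shows ext_o_subset_odom: "ext_o M C \<subseteq> odom M"
    and ext_a_subset_adom: "ext_a M A \<subseteq> adom M"
  using assms by (induction C and A) (auto simp: is_model_def)

lemma valid_OImp_iff:
  "is_model M \<Longrightarrow> valid_in M (Obj (OImp C D)) \<longleftrightarrow> ext_o M C \<subseteq> ext_o M D"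
  using ext_o_subset_odom[of M C] ext_o_subset_odom[of M D] by (auto simp: OImp_def)

lemma valid_AImp_iff:
  "is_model M \<Longrightarrow> valid_in M (Att (AImp A B)) \<longleftrightarrow> ext_a M A \<subseteq> ext_a M B"
  using ext_a_subset_adom[of M A] ext_a_subset_adom[of M B] by (auto simp: AImp_def)

lemma valid_OAnd_iff:
  "is_model M \<Longrightarrow> valid_in M (Obj (OAnd C D)) \<longleftrightarrow> valid_in M (Obj C) \<and> valid_in M (Obj D)"
  using ext_o_subset_odom[of M C] ext_o_subset_odom[of M D] by auto

lemma valid_AAnd_iff:
  "is_model M \<Longrightarrow> valid_in M (Att (AAnd A B)) \<longleftrightarrow> valid_in M (Att A) \<and> valid_in M (Att B)"
  using ext_a_subset_adom[of M A] ext_a_subset_adom[of M B] by auto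

lemma valid_OIff_iff:
  "is_model M \<Longrightarrow> valid_in M (Obj (OIff C D)) \<longleftrightarrow> ext_o M C = ext_o M D"
  unfolding OIff_def valid_OAnd_iff valid_OImp_iff by auto

lemma valid_AIff_iff:
  "is_model M \<Longrightarrow> valid_in M (Att (AIff A B)) \<longleftrightarrow> ext_a M A = ext_a M B"
  unfolding AIff_def valid_AAnd_iff valid_AImp_iff by auto

lemma obj_axiom_valid:
  assumes "obj_axiom C" and M: "is_model M"
  shows "valid_in M (Obj C)"
  using assms(1) by induction (use ext_o_subset_odom[OF M] in \<open>auto simp: OImp_def\<close>)

lemma att_axiom_valid:
  assumes "att_axiom A" and M: "is_model M"
  shows "valid_in M (Att A)"
  using assms(1) by induction (use ext_a_subset_adom[OF M] in \<open>auto simp: AImp_def\<close>)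

lemma derivable_valid:
  assumes "derivable \<Gamma> \<phi>" and M: "is_model M" and "\<forall>\<psi>\<in>\<Gamma>. valid_in M \<psi>"
  shows "valid_in M \<phi>"
  using assms(1,3)
proof induction
  case (mp_obj \<Gamma> C D)
  then show ?case using ext_o_subset_odom[OF M, of D] valid_OImp_iff[OF M, of C D] by auto
next
  case (mp_att \<Gamma> A B)
  then show ?case using ext_a_subset_adom[OF M, of B] valid_AImp_iff[OF M, of A B] by auto
qed (auto simp del: valid_in.simps
      simp: obj_axiom_valid[OF _ M] att_axiom_valid[OF _ M] valid_OImp_iff[OF M] valid_AImp_iff[OF M]
        valid_OIff_iff[OF M] valid_AIff_iff[OF M])

theorem theorem2:
  fixes \<Gamma> :: "concept set" and \<phi> :: concept
  assumes "derivable \<Gamma> \<phi>"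
  shows "entails TYPE('d) TYPE('s) \<Gamma> \<phi>"
  using derivable_valid[OF assms] unfolding entails_def by blast

end
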